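(* Let $G$ be a connected graph that is not a clique and that has a min-max clique covering satisfying simple intersection, and let $\mathcal{C}(G)$ be its compressed cliques graph. Then \[ |V(G)|-Z_+(G)=|V(\mathcal{C}(G))|-Z_+(\mathcal{C}(G)). \] Moreover, there exist collections of forcing trees for $G$ and for $\mathcal{C}(G)$ that differ only in that the collection for $G$ may contain additional forcing trees that are isolated vertices.
   Context: A clique covering of a graph is a set of cliques such that every edge lies in at least one of them; $\operatorname{cc}(G)$ is its minimum size. A min-max clique covering is a clique covering of size $\operatorname{cc}(G)$ consisting of maximal cliques; it has simple intersection if no three distinct cliques of it share a vertex. Given such a covering $\{C_1,\dots,C_\ell\}$, put $C_{i,j}=C_i\cap C_j$ ($i\ne j$) and $C_{i,i}=C_i\setminus\bigcup_{j\ne i}C_j$; the compressed cliques graph $\mathcal{C}(G)$ has a vertex $v_{i,j}$ for each non-empty $C_{i,j}$ (including $i=j$), with $v_{i,j}\sim v_{i',j'}$ iff $\{i,j\}\cap\{i',j'\}\ne\emptyset$. Positive zero forcing: initially the vertices of a set $B$ are black and all others white. Repeatedly, let $W_1,\dots,W_k$ be the vertex sets of the components of $G$ minus the black vertices; if a black vertex $u$ has exactly one white neighbour $w$ in the subgraph induced by $W_i\cup(\text{black vertices})$, then $u$ may force $w$ (colour it black). $B$ is a positive zero forcing set if eventually all vertices become black; $Z_+(G)$ is the minimum size of such a set. Recording which vertex forces which, the forcing process partitions $V(G)$ into vertex-disjoint induced rooted trees called forcing trees (roots being initially black vertices). *)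

theory Defs
  imports Main
begin

definition sgraph :: "'a set \<Rightarrow> 'a set set \<Rightarrow> bool" where
  "sgraph V E \<longleftrightarrow> finite V \<and> (\<forall>e\<in>E. \<exists>u v. u \<noteq> v \<and> u \<in> V \<and> v \<in> V \<and> e = {u, v})"

definition adj :: "'a set set \<Rightarrow> 'a \<Rightarrow> 'a \<Rightarrow> bool" where
  "adj E u v \<longleftrightarrow> u \<noteq> v \<and> {u, v} \<in> E"

definition connected_graph :: "'a set \<Rightarrow> 'a set set \<Rightarrow> bool" where
  "connected_graph V E \<longleftrightarrow> V \<noteq> {} \<and> (\<forall>u\<in>V. \<forall>v\<in>V. (adj E)\<^sup>*\<^sup>* u v)"

definition is_clique :: "'a set \<Rightarrow> 'a set set \<Rightarrow> 'a set \<Rightarrow> bool" where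
  "is_clique V E C \<longleftrightarrow> C \<subseteq> V \<and> (\<forall>u\<in>C. \<forall>v\<in>C. u \<noteq> v \<longrightarrow> {u, v} \<in> E)"

definition maximal_clique :: "'a set \<Rightarrow> 'a set set \<Rightarrow> 'a set \<Rightarrow> bool" where
  "maximal_clique V E C \<longleftrightarrow> is_clique V E C \<and> (\<forall>D. is_clique V E D \<and> C \<subseteq> D \<longrightarrow> D = C)"

definition clique_cover :: "'a set \<Rightarrow> 'a set set \<Rightarrow> 'a set set \<Rightarrow> bool" where
  "clique_cover V E \<C> \<longleftrightarrow> finite \<C> \<and> (\<forall>C\<in>\<C>. is_clique V E C) \<and> (\<forall>e\<in>E. \<exists>C\<in>\<C>. e \<subseteq> C)"

definition cc :: "'a set \<Rightarrow> 'a set set \<Rightarrow> nat" where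
  "cc V E = Min {card \<C> | \<C>. clique_cover V E \<C>}"

definition minmax_clique_cover :: "'a set \<Rightarrow> 'a set set \<Rightarrow> 'a set set \<Rightarrow> bool" where
  "minmax_clique_cover V E \<C> \<longleftrightarrow> clique_cover V E \<C> \<and> card \<C> = cc V E \<and> (\<forall>C\<in>\<C>. maximal_clique V E C)"

definition simple_intersection :: "'a set set \<Rightarrow> bool" where
  "simple_intersection \<C> \<longleftrightarrow>
     (\<forall>C1\<in>\<C>. \<forall>C2\<in>\<C>. \<forall>C3\<in>\<C>. C1 \<noteq> C2 \<and> C1 \<noteq> C3 \<and> C2 \<noteq> C3 \<longrightarrow> C1 \<inter> C2 \<inter> C3 = {})"

text \<open>The index {i,j} (unordered, possibly i = j) is represented by the set of cliques
  {C_i, C_j} (a one- or two-element subset of the covering). The part C_{i,j}:\<close>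
definition cpart :: "'a set set \<Rightarrow> 'a set set \<Rightarrow> 'a set" where
  "cpart \<C> I = (if card I = 1 then the_elem I - \<Union>(\<C> - I) else \<Inter> I)"

definition ccg_V :: "'a set set \<Rightarrow> 'a set set set" where
  "ccg_V \<C> = {I. I \<subseteq> \<C> \<and> (card I = 1 \<or> card I = 2) \<and> cpart \<C> I \<noteq> {}}"

definition ccg_E :: "'a set set \<Rightarrow> 'a set set set set" where
  "ccg_E \<C> = {{I, J} | I J. I \<in> ccg_V \<C> \<and> J \<in> ccg_V \<C> \<and> I \<noteq> J \<and> I \<inter> J \<noteq> {}}"

definition white_comp :: "'a set \<Rightarrow> 'a set set \<Rightarrow> 'a set \<Rightarrow> 'a \<Rightarrow> 'a set" where
  "white_comp V E B w =
     {x \<in> V - B. (\<lambda>a b. adj E a b \<and> a \<in> V - B \<and> b \<in> V - B)\<^sup>*\<^sup>* w x}"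

definition can_force :: "'a set \<Rightarrow> 'a set set \<Rightarrow> 'a set \<Rightarrow> 'a \<Rightarrow> 'a \<Rightarrow> bool" where
  "can_force V E B u w \<longleftrightarrow> u \<in> B \<and> B \<subseteq> V \<and> w \<in> V - B \<and>
     {x \<in> white_comp V E B w. adj E u x} = {w}"

fun force_seq :: "'a set \<Rightarrow> 'a set set \<Rightarrow> 'a set \<Rightarrow> ('a \<times> 'a) list \<Rightarrow> bool" where
  "force_seq V E B [] = True"
| "force_seq V E B ((u, w) # fs) = (can_force V E B u w \<and> force_seq V E (insert w B) fs)"

text \<open>B together with the forces fs is a complete positive zero forcing process.
  Its forcing trees are given by the roots B and the forcing edges set fs.\<close>
definition pzf_process :: "'a set \<Rightarrow> 'a set set \<Rightarrow> 'a set \<Rightarrow> ('a \<times> 'a) list \<Rightarrow> bool" where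
  "pzf_process V E B fs \<longleftrightarrow> B \<subseteq> V \<and> force_seq V E B fs \<and> B \<union> snd ` set fs = V"

definition pzf_set :: "'a set \<Rightarrow> 'a set set \<Rightarrow> 'a set \<Rightarrow> bool" where
  "pzf_set V E B \<longleftrightarrow> (\<exists>fs. pzf_process V E B fs)"

definition Zplus :: "'a set \<Rightarrow> 'a set set \<Rightarrow> nat" where
  "Zplus V E = Min {card B | B. pzf_set V E B}"

end

theory Submission
  imports Defs
begin

text \<open>As G is connected and not a clique, every vertex v lies in some clique of the covering, and
  by simple intersection in at most two; the set of these cliques is a vertex of the compressed cliques graph H. Two vertices of G are adjacent
  iff they share a clique, i.e. iff their sets of cliques coincide or are adjacent in H. So G arises
  from H by blowing up every vertex into a clique of true twins. For such a blow-up of a graph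
  without isolated vertices, complete forcing processes transfer in both directions with the same
  number of forces: a process in H lifts to G by choosing one representative per class and making
  all other vertices black from the start; a process in G projects to H by calling a class black
  when all its vertices are, because a vertex forced in G is always the last white vertex of its
  class. Since the number of forces is |V| - |B|, the two quantities agree, and the lift of an
  optimal process of H is an optimal process of G.\<close>

lemma adj_sym: "adj E u v \<longleftrightarrow> adj E v u"
  unfolding adj_def by (auto simp: insert_commute)

lemma adj_irrefl: "\<not> adj E u u"
  unfolding adj_def by auto

lemma white_comp_refl: "w \<in> V - B \<Longrightarrow> w \<in> white_comp V E B w"
  unfolding white_comp_def by auto

lemma white_comp_adj: "\<lbrakk>w \<in> V - B; y \<in> V - B; adj E w y\<rbrakk> \<Longrightarrow> y \<in> white_comp V E B w"
  unfolding white_comp_def by (auto intro: r_into_rtranclp)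

lemma white_comp_isolated:
  assumes "w \<in> V - B" and "\<And>y. y \<in> V - B \<Longrightarrow> \<not> adj E w y"
  shows "white_comp V E B w = {w}"
proof
  show "white_comp V E B w \<subseteq> {w}"
  proof
    fix x assume "x \<in> white_comp V E B w"
    then have "(\<lambda>a b. adj E a b \<and> a \<in> V - B \<and> b \<in> V - B)\<^sup>*\<^sup>* w x"
      unfolding white_comp_def by auto
    then show "x \<in> {w}"
      by (cases rule: converse_rtranclpE) (use assms(2) in auto)
  qed
qed (use white_comp_refl[OF assms(1)] in auto)

lemma connected_non_clique_ex_adj:
  assumes "connected_graph V E" and "\<not> is_clique V E V" and "v \<in> V"
  shows "\<exists>u. adj E v u"
proof -
  obtain a b where "a \<in> V" "b \<in> V" "a \<noteq> b" using assms(2) unfolding is_clique_def by auto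
  then obtain x where x: "x \<in> V" "x \<noteq> v" by metis
  then have "(adj E)\<^sup>*\<^sup>* v x" using assms(1,3) unfolding connected_graph_def by auto
  then show ?thesis by (cases rule: converse_rtranclpE) (use x in auto)
qed

lemma force_seq_card:
  "force_seq V E B fs \<Longrightarrow> finite B \<Longrightarrow> card (B \<union> snd ` set fs) = card B + length fs"
proof (induction fs arbitrary: B)
  case (Cons p fs)
  obtain u w where p: "p = (u, w)" by (cases p)
  with Cons.prems have "w \<notin> B" and fs: "force_seq V E (insert w B) fs"
    by (auto simp: can_force_def)
  moreover have "B \<union> snd ` set (p # fs) = insert w B \<union> snd ` set fs" using p by auto
  ultimately show ?case using Cons.IH[OF fs] Cons.prems(2) by simp
qed simp

lemma pzf_process_card: "pzf_process V E B fs \<Longrightarrow> finite V \<Longrightarrow> card V = card B + length fs"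
  unfolding pzf_process_def by (metis finite_subset force_seq_card)

lemma finite_pzf_cards: "finite V \<Longrightarrow> finite {card B | B. pzf_set V E B}"
  by (rule finite_subset[of _ "{..card V}"])
    (auto simp: pzf_set_def pzf_process_def intro: card_mono)

lemma Zplus_le: "finite V \<Longrightarrow> pzf_set V E B \<Longrightarrow> Zplus V E \<le> card B"
  unfolding Zplus_def using finite_pzf_cards by (blast intro: Min_le)

lemma Zplus_attained:
  assumes "finite V"
  obtains B fs where "pzf_process V E B fs" and "card B = Zplus V E"
proof -
  have "pzf_set V E V" unfolding pzf_set_def pzf_process_def by (rule exI[of _ "[]"]) simp
  then have "Zplus V E \<in> {card B | B. pzf_set V E B}"
    unfolding Zplus_def using finite_pzf_cards[OF assms] by (intro Min_in) auto
  then show ?thesis using that unfolding pzf_set_def by auto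
qed


text \<open>G = (V, E) is obtained from H = (W, EH) by replacing each vertex I of H by the clique of twins
  {v \<in> V. f v = I}.\<close>

locale clique_blowup =
  fixes V :: "'a set" and E :: "'a set set" and W :: "'b set" and EH :: "'b set set"
    and f :: "'a \<Rightarrow> 'b"
  assumes finite_V: "finite V" and finite_W: "finite W"
    and adj_in_V: "adj E u v \<Longrightarrow> u \<in> V \<and> v \<in> V"
    and adj_in_W: "adj EH I J \<Longrightarrow> I \<in> W \<and> J \<in> W"
    and f_in_W: "v \<in> V \<Longrightarrow> f v \<in> W"
    and adj_iff: "\<lbrakk>u \<in> V; v \<in> V; u \<noteq> v\<rbrakk> \<Longrightarrow> adj E u v \<longleftrightarrow> f u = f v \<or> adj EH (f u) (f v)"
begin

lemma ex_adj_class_of_connected: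
  assumes "connected_graph V E" and "w \<in> V" "x \<in> V" "f x \<noteq> f w"
  shows "\<exists>J. adj EH (f w) J"
proof -
  have "(adj E)\<^sup>*\<^sup>* w x" using assms unfolding connected_graph_def by auto
  then have "\<exists>y z. adj E y z \<and> f y = f w \<and> f z \<noteq> f w"
    using assms(4) by (induction rule: rtranclp_induct) auto
  then obtain y z where yz: "adj E y z" "f y = f w" "f z \<noteq> f w" by blast
  then have "adj EH (f y) (f z)"
    using adj_iff[of y z] adj_in_V[OF yz(1)] adj_irrefl[of E y] by auto
  then show ?thesis using yz(2) by auto
qed

subsection \<open>Projecting forcing processes from G to H\<close>

definition project_black :: "'a set \<Rightarrow> 'b set" where
  "project_black B = {I \<in> W. \<forall>v\<in>V. f v = I \<longrightarrow> v \<in> B}"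

lemma project_black_subset: "project_black B \<subseteq> W"
  unfolding project_black_def by auto

lemma project_black_Un_white: "project_black B \<union> f ` (V - B) = W"
  unfolding project_black_def using f_in_W by auto

lemma white_comp_project:
  assumes "B \<subseteq> V" and w: "w \<in> V - B" and "X \<in> white_comp W EH (project_black B) (f w)"
  shows "\<exists>x \<in> white_comp V E B w. f x = X"
proof -
  let ?R = "\<lambda>a b. adj EH a b \<and> a \<in> W - project_black B \<and> b \<in> W - project_black B"
  from assms(3) have "?R\<^sup>*\<^sup>* (f w) X" unfolding white_comp_def by auto
  then show ?thesis
  proof (induction rule: rtranclp_induct)
    case base
    show ?case using white_comp_refl[OF w] by blast
  next
    case (step Y Z)
    from step.IH obtain y where y: "y \<in> white_comp V E B w" "f y = Y" by blast
    from step.hyps(2) have aYZ: "adj EH Y Z" and "Z \<notin> project_black B" by auto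
    then obtain z where z: "z \<in> V" "z \<notin> B" "f z = Z"
      using adj_in_W unfolding project_black_def by blast
    have yV: "y \<in> V" "y \<notin> B" and wy: "(\<lambda>a b. adj E a b \<and> a \<in> V - B \<and> b \<in> V - B)\<^sup>*\<^sup>* w y"
      using y(1) unfolding white_comp_def by auto
    have "y \<noteq> z" using aYZ y z adj_irrefl by metis
    then have "adj E y z" using adj_iff[OF yV(1) z(1)] aYZ y(2) z(3) by simp
    with wy yV z have "z \<in> white_comp V E B w"
      unfolding white_comp_def by (auto intro: rtranclp.rtrancl_into_rtrancl)
    then show ?case using z by blast
  qed
qed

text \<open>A forced vertex has no white twin: the twin would be a second white neighbour of the forcing
  vertex in the same component.\<close>

lemma can_force_no_white_twin:
  assumes "can_force V E B u w" and "w' \<in> V - B" and "f w' = f w"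
  shows "w' = w"
proof (rule ccontr)
  assume ne: "w' \<noteq> w"
  from assms(1) have uV: "u \<in> V" and uB: "u \<in> B" and w: "w \<in> V - B"
    and S: "{x \<in> white_comp V E B w. adj E u x} = {w}" unfolding can_force_def by auto
  have "adj E u w" using S by auto
  then have "f u = f w \<or> adj EH (f u) (f w)" using adj_iff[OF uV] w uB by auto
  then have "adj E u w'" using adj_iff[OF uV, of w'] assms(2,3) uB by auto
  moreover have "adj E w w'" using adj_iff[of w w'] w assms(2,3) ne by auto
  then have "w' \<in> white_comp V E B w" using white_comp_adj w assms(2) by metis
  ultimately show False using S ne by auto
qed

lemma project_black_insert:
  "can_force V E B u w \<Longrightarrow> project_black (insert w B) = insert (f w) (project_black B)"
  unfolding project_black_def using can_force_no_white_twin f_in_W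
  by (auto simp: can_force_def)

lemma can_force_projectI:
  assumes "B \<subseteq> V" and w: "w \<in> V - B" and "K \<in> project_black B" and "adj EH K (f w)"
    and only_w: "\<And>x. x \<in> white_comp V E B w \<Longrightarrow> adj EH K (f x) \<Longrightarrow> f x = f w"
  shows "can_force W EH (project_black B) K (f w)"
proof -
  have fw: "f w \<in> W - project_black B" using w f_in_W unfolding project_black_def by auto
  have "{X \<in> white_comp W EH (project_black B) (f w). adj EH K X} = {f w}"
    using white_comp_project[OF assms(1) w] only_w white_comp_refl[OF fw] assms(4) by fastforce
  then show ?thesis unfolding can_force_def using assms(3) project_black_subset fw by blast
qed

lemma can_force_project_distinct:
  assumes "B \<subseteq> V" and cf: "can_force V E B u w" and "f u \<noteq> f w"
  shows "can_force W EH (project_black B) (f u) (f w)"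
proof -
  from cf have uV: "u \<in> V" and uB: "u \<in> B" and w: "w \<in> V - B"
    and S: "{x \<in> white_comp V E B w. adj E u x} = {w}" unfolding can_force_def by auto
  have adj_u: "adj E u x \<longleftrightarrow> f u = f x \<or> adj EH (f u) (f x)" if "x \<in> V - B" for x
    using that uB by (intro adj_iff[OF uV]) auto
  have "adj E u w" using S by auto
  then have afuw: "adj EH (f u) (f w)" using adj_u w assms(3) by simp
  have "f u \<in> project_black B"
  proof -
    have "v \<in> B" if v: "v \<in> V" "f v = f u" for v
    proof (rule ccontr)
      assume vB: "v \<notin> B"
      have vw: "v \<noteq> w" using v(2) assms(3) by auto
      have "adj EH (f w) (f v)" using afuw v(2) adj_sym by metis
      then have "adj E w v" using adj_iff[of w v] w v(1) vw by blast
      then have "v \<in> white_comp V E B w" using v(1) vB by (intro white_comp_adj[OF w]) auto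
      moreover have "adj E u v" using adj_u v vB by simp
      ultimately show False using S vw by auto
    qed
    then show ?thesis unfolding project_black_def using f_in_W[OF uV] by auto
  qed
  moreover have "f x = f w" if x: "x \<in> white_comp V E B w" "adj EH (f u) (f x)" for x
  proof -
    have "x \<in> V - B" using x(1) unfolding white_comp_def by auto
    then have "adj E u x" using adj_u x(2) by simp
    then show ?thesis using S x(1) by auto
  qed
  ultimately show ?thesis using can_force_projectI[OF assms(1) w] afuw by blast
qed

text \<open>If u forces its own twin w, then w has no white neighbour at all, so any neighbour class of
  f w is black and may force f w in H.\<close>

lemma can_force_project_twin:
  assumes "B \<subseteq> V" and cf: "can_force V E B u w" and "f u = f w" and aJ: "adj EH (f w) J"
  shows "can_force W EH (project_black B) J (f w)"
proof -
  from cf have uV: "u \<in> V" and uB: "u \<in> B" and w: "w \<in> V - B"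
    and S: "{x \<in> white_comp V E B w. adj E u x} = {w}" unfolding can_force_def by auto
  have no_white: "\<not> adj E w y" if y: "y \<in> V - B" for y
  proof
    assume awy: "adj E w y"
    then have "y \<noteq> w" using adj_irrefl by metis
    moreover have "adj E u y"
    proof -
      have "y \<in> V" "u \<noteq> y" using y uB by auto
      moreover have "f w = f y \<or> adj EH (f w) (f y)"
        using adj_iff[of w y] w \<open>y \<in> V\<close> \<open>y \<noteq> w\<close> awy by auto
      ultimately show ?thesis using adj_iff[OF uV] assms(3) by simp
    qed
    ultimately show False using S white_comp_adj[OF w y awy] by auto
  qed
  have "J \<in> project_black B"
  proof -
    have "v \<in> B" if v: "v \<in> V" "f v = J" for v
    proof (rule ccontr)
      assume "v \<notin> B"
      have "f w \<noteq> J" using aJ adj_irrefl by metis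
      then have "adj E w v" using adj_iff[of w v] w v aJ by auto
      then show False using no_white v \<open>v \<notin> B\<close> by auto
    qed
    then show ?thesis unfolding project_black_def using adj_in_W[OF aJ] by auto
  qed
  moreover have "adj EH J (f w)" using aJ adj_sym by metis
  ultimately show ?thesis
    using can_force_projectI[OF assms(1) w] white_comp_isolated[OF w no_white] by auto
qed

lemma force_seq_project:
  assumes no_isolated: "\<forall>I\<in>W. \<exists>J. adj EH I J"
  shows "B \<subseteq> V \<Longrightarrow> force_seq V E B fs \<Longrightarrow>
    \<exists>fs'. force_seq W EH (project_black B) fs' \<and> map snd fs' = map (f \<circ> snd) fs"
proof (induction fs arbitrary: B)
  case Nil
  show ?case by (rule exI[of _ "[]"]) simp
next
  case (Cons p fs)
  obtain u w where p: "p = (u, w)" by (cases p)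
  with Cons.prems have cf: "can_force V E B u w" and fs: "force_seq V E (insert w B) fs" by auto
  then have wV: "w \<in> V" unfolding can_force_def by auto
  obtain u' where cf': "can_force W EH (project_black B) u' (f w)"
  proof (cases "f u = f w")
    case True
    then obtain J where "adj EH (f w) J" using no_isolated f_in_W[OF wV] by blast
    then show ?thesis using that can_force_project_twin[OF Cons.prems(1) cf True] by blast
  qed (use that can_force_project_distinct[OF Cons.prems(1) cf] in blast)
  obtain fs' where "force_seq W EH (project_black (insert w B)) fs'"
    and "map snd fs' = map (f \<circ> snd) fs"
    using Cons.IH[OF _ fs] Cons.prems(1) wV by blast
  then show ?case
    using cf' project_black_insert[OF cf] p by (intro exI[of _ "(u', f w) # fs'"]) simp
qed

lemma pzf_process_project:
  assumes "\<forall>I\<in>W. \<exists>J. adj EH I J" and P: "pzf_process V E B fs"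
  obtains fs' where "pzf_process W EH (project_black B) fs'" and "length fs' = length fs"
proof -
  from P have B: "B \<subseteq> V" and fsq: "force_seq V E B fs" and cov: "B \<union> snd ` set fs = V"
    unfolding pzf_process_def by auto
  obtain fs' where fs': "force_seq W EH (project_black B) fs'"
    and snd_fs': "map snd fs' = map (f \<circ> snd) fs"
    using force_seq_project[OF assms(1) B fsq] by blast
  have "snd ` set fs' = f ` snd ` set fs" using arg_cong[OF snd_fs', of set] by (simp add: image_comp)
  moreover have "project_black B \<union> f ` snd ` set fs = W"
  proof
    show "project_black B \<union> f ` snd ` set fs \<subseteq> W"
      using project_black_subset f_in_W cov by blast
    show "W \<subseteq> project_black B \<union> f ` snd ` set fs"
      using project_black_Un_white[of B] image_mono[of "V - B" "snd ` set fs" f] cov by blast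
  qed
  ultimately have "project_black B \<union> snd ` set fs' = W" by simp
  then show ?thesis
    using that fs' project_black_subset arg_cong[OF snd_fs', of length]
    unfolding pzf_process_def by auto
qed

subsection \<open>Lifting forcing processes from H to G\<close>

definition lift_black :: "('b \<Rightarrow> 'a) \<Rightarrow> 'b set \<Rightarrow> 'a set" where
  "lift_black \<phi> B' = \<phi> ` B' \<union> (V - \<phi> ` W)"

context
  fixes \<phi> :: "'b \<Rightarrow> 'a"
  assumes section_in_V: "\<And>I. I \<in> W \<Longrightarrow> \<phi> I \<in> V"
    and f_section: "\<And>I. I \<in> W \<Longrightarrow> f (\<phi> I) = I"
begin

lemma adj_section_iff: "I \<in> W \<Longrightarrow> J \<in> W \<Longrightarrow> adj E (\<phi> I) (\<phi> J) \<longleftrightarrow> adj EH I J"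
  using adj_iff[OF section_in_V section_in_V] f_section adj_irrefl by metis

lemma lift_black_subset: "B' \<subseteq> W \<Longrightarrow> lift_black \<phi> B' \<subseteq> V"
  unfolding lift_black_def using section_in_V by auto

lemma white_lift_black: "B' \<subseteq> W \<Longrightarrow> V - lift_black \<phi> B' = \<phi> ` (W - B')"
  unfolding lift_black_def using section_in_V f_section by (auto, metis subsetD)

lemma white_comp_lift:
  assumes B': "B' \<subseteq> W" and J: "J \<in> W - B'" and "x \<in> white_comp V E (lift_black \<phi> B') (\<phi> J)"
  shows "\<exists>X \<in> white_comp W EH B' J. x = \<phi> X"
proof -
  let ?R = "\<lambda>a b. adj E a b \<and> a \<in> V - lift_black \<phi> B' \<and> b \<in> V - lift_black \<phi> B'"
  from assms(3) have "?R\<^sup>*\<^sup>* (\<phi> J) x" unfolding white_comp_def by auto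
  then show ?thesis
  proof (induction rule: rtranclp_induct)
    case base
    show ?case using white_comp_refl[OF J] by blast
  next
    case (step y z)
    from step.IH obtain Y where Y: "Y \<in> white_comp W EH B' J" "y = \<phi> Y" by blast
    from step.hyps(2) obtain Z where Z: "Z \<in> W - B'" "z = \<phi> Z"
      using white_lift_black[OF B'] by auto
    have YW: "Y \<in> W - B'" and JY: "(\<lambda>a b. adj EH a b \<and> a \<in> W - B' \<and> b \<in> W - B')\<^sup>*\<^sup>* J Y"
      using Y(1) unfolding white_comp_def by auto
    have "adj EH Y Z" using step.hyps(2) adj_section_iff YW Z Y(2) by auto
    with JY YW Z have "Z \<in> white_comp W EH B' J"
      unfolding white_comp_def by (auto intro: rtranclp.rtrancl_into_rtrancl)
    then show ?case using Z by blast
  qed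
qed

lemma can_force_lift:
  assumes B': "B' \<subseteq> W" and cf: "can_force W EH B' I J"
  shows "can_force V E (lift_black \<phi> B') (\<phi> I) (\<phi> J)"
proof -
  from cf have I: "I \<in> B'" and J: "J \<in> W - B'"
    and S: "{X \<in> white_comp W EH B' J. adj EH I X} = {J}" unfolding can_force_def by auto
  have IW: "I \<in> W" using I B' by auto
  have phiJ: "\<phi> J \<in> V - lift_black \<phi> B'" using white_lift_black[OF B'] J by auto
  have "{x \<in> white_comp V E (lift_black \<phi> B') (\<phi> J). adj E (\<phi> I) x} = {\<phi> J}"
  proof
    show "{x \<in> white_comp V E (lift_black \<phi> B') (\<phi> J). adj E (\<phi> I) x} \<subseteq> {\<phi> J}"
    proof clarify
      fix x assume x: "x \<in> white_comp V E (lift_black \<phi> B') (\<phi> J)" and a: "adj E (\<phi> I) x"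
      obtain X where X: "X \<in> white_comp W EH B' J" "x = \<phi> X"
        using white_comp_lift[OF B' J x] by blast
      then have "adj EH I X" using a adj_section_iff[OF IW] unfolding white_comp_def by auto
      then show "x = \<phi> J" using S X by auto
    qed
    show "{\<phi> J} \<subseteq> {x \<in> white_comp V E (lift_black \<phi> B') (\<phi> J). adj E (\<phi> I) x}"
      using S adj_section_iff[OF IW] J white_comp_refl[OF phiJ] by auto
  qed
  then show ?thesis
    unfolding can_force_def using I phiJ lift_black_subset[OF B'] unfolding lift_black_def by blast
qed

lemma force_seq_lift:
  "B' \<subseteq> W \<Longrightarrow> force_seq W EH B' fs \<Longrightarrow>
    force_seq V E (lift_black \<phi> B') (map (\<lambda>(u, w). (\<phi> u, \<phi> w)) fs)"
proof (induction fs arbitrary: B')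
  case (Cons p fs)
  obtain I J where p: "p = (I, J)" by (cases p)
  with Cons.prems have cf: "can_force W EH B' I J" and fs: "force_seq W EH (insert J B') fs" by auto
  have JW: "J \<in> W" using cf unfolding can_force_def by auto
  have "lift_black \<phi> (insert J B') = insert (\<phi> J) (lift_black \<phi> B')"
    unfolding lift_black_def using JW by auto
  then show ?case
    using Cons.IH[OF _ fs] Cons.prems(1) JW can_force_lift[OF Cons.prems(1) cf] p by simp
qed simp

lemma pzf_process_lift:
  assumes "pzf_process W EH B' fs"
  shows "pzf_process V E (lift_black \<phi> B') (map (\<lambda>(u, w). (\<phi> u, \<phi> w)) fs)"
proof -
  from assms have B': "B' \<subseteq> W" and cov: "B' \<union> snd ` set fs = W"
    unfolding pzf_process_def by auto
  have "snd ` set (map (\<lambda>(u, w). (\<phi> u, \<phi> w)) fs) = \<phi> ` snd ` set fs"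
    unfolding set_map image_image by (simp add: case_prod_beta)
  moreover have "lift_black \<phi> B' \<union> \<phi> ` snd ` set fs = \<phi> ` (B' \<union> snd ` set fs) \<union> (V - \<phi> ` W)"
    unfolding lift_black_def by blast
  moreover have "\<phi> ` W \<union> (V - \<phi> ` W) = V" using section_in_V by blast
  ultimately have "lift_black \<phi> B' \<union> snd ` set (map (\<lambda>(u, w). (\<phi> u, \<phi> w)) fs) = V"
    using cov by simp
  then show ?thesis
    using force_seq_lift[OF B'] assms lift_black_subset[OF B'] unfolding pzf_process_def by blast
qed

lemma Zplus_blowup:
  assumes "\<forall>I\<in>W. \<exists>J. adj EH I J"
  shows "card V + Zplus W EH = card W + Zplus V E"
proof -
  obtain B' fs' where P': "pzf_process W EH B' fs'" and B': "card B' = Zplus W EH"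
    using Zplus_attained[OF finite_W] .
  have lift: "pzf_process V E (lift_black \<phi> B') (map (\<lambda>(u, w). (\<phi> u, \<phi> w)) fs')"
    using pzf_process_lift[OF P'] .
  then have le: "Zplus V E + length fs' \<le> card V"
    using Zplus_le[OF finite_V, of E "lift_black \<phi> B'"] pzf_process_card[OF lift finite_V]
    unfolding pzf_set_def by auto
  obtain B fs where P: "pzf_process V E B fs" and B: "card B = Zplus V E"
    using Zplus_attained[OF finite_V] .
  obtain fs'' where proj: "pzf_process W EH (project_black B) fs''" and "length fs'' = length fs"
    using pzf_process_project[OF assms P] .
  then have ge: "Zplus W EH + length fs \<le> card W"
    using Zplus_le[OF finite_W, of EH "project_black B"] pzf_process_card[OF proj finite_W]
    unfolding pzf_set_def by auto
  show ?thesis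
    using le ge pzf_process_card[OF P finite_V] pzf_process_card[OF P' finite_W] B B' by linarith
qed

lemma optimal_process_lift:
  assumes "\<forall>I\<in>W. \<exists>J. adj EH I J"
  obtains B' fs' where "pzf_process W EH B' fs'" and "card B' = Zplus W EH"
    and "pzf_process V E (lift_black \<phi> B') (map (\<lambda>(u, w). (\<phi> u, \<phi> w)) fs')"
    and "card (lift_black \<phi> B') = Zplus V E"
proof -
  obtain B' fs' where P': "pzf_process W EH B' fs'" and B': "card B' = Zplus W EH"
    using Zplus_attained[OF finite_W] .
  have "card (lift_black \<phi> B') = Zplus V E"
    using pzf_process_card[OF pzf_process_lift[OF P'] finite_V] pzf_process_card[OF P' finite_W]
      Zplus_blowup[OF assms] B' by simp
  then show ?thesis using that P' B' pzf_process_lift[OF P'] by blast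
qed

lemma no_isolated_of_connected:
  assumes "connected_graph V E" and "a \<in> V" "b \<in> V" "f a \<noteq> f b"
  shows "\<forall>I\<in>W. \<exists>J. adj EH I J"
proof
  fix I assume I: "I \<in> W"
  obtain x where "x \<in> V" "f x \<noteq> f (\<phi> I)" using assms(2-4) by metis
  then show "\<exists>J. adj EH I J"
    using ex_adj_class_of_connected[OF assms(1) section_in_V[OF I]] f_section[OF I] by simp
qed

end

end


subsection \<open>The compressed cliques graph\<close>

definition cliques_at :: "'a set set \<Rightarrow> 'a \<Rightarrow> 'a set set" where
  "cliques_at \<C> v = {C \<in> \<C>. v \<in> C}"

lemma adj_ccg_E_iff:
  "adj (ccg_E \<C>) I J \<longleftrightarrow> I \<in> ccg_V \<C> \<and> J \<in> ccg_V \<C> \<and> I \<noteq> J \<and> I \<inter> J \<noteq> {}"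
  unfolding adj_def ccg_E_def by (auto simp: doubleton_eq_iff)

lemma edge_iff_cliques_at:
  assumes "clique_cover V E \<C>" and "u \<in> V" "v \<in> V" "u \<noteq> v"
  shows "{u, v} \<in> E \<longleftrightarrow> cliques_at \<C> u \<inter> cliques_at \<C> v \<noteq> {}"
proof
  assume "{u, v} \<in> E"
  then obtain C where "C \<in> \<C>" "{u, v} \<subseteq> C" using assms(1) unfolding clique_cover_def by blast
  then show "cliques_at \<C> u \<inter> cliques_at \<C> v \<noteq> {}" unfolding cliques_at_def by auto
next
  assume "cliques_at \<C> u \<inter> cliques_at \<C> v \<noteq> {}"
  then obtain C where "C \<in> \<C>" "u \<in> C" "v \<in> C" unfolding cliques_at_def by auto
  then show "{u, v} \<in> E" using assms unfolding clique_cover_def is_clique_def by auto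
qed

lemma simple_intersectionD:
  "\<lbrakk>simple_intersection \<C>; C1 \<in> \<C>; C2 \<in> \<C>; C3 \<in> \<C>; C1 \<noteq> C2; C1 \<noteq> C3; C2 \<noteq> C3\<rbrakk>
    \<Longrightarrow> C1 \<inter> C2 \<inter> C3 = {}"
  unfolding simple_intersection_def by blast

lemma card_cliques_at_le:
  assumes "simple_intersection \<C>"
  shows "card (cliques_at \<C> v) \<le> 2"
proof (rule ccontr)
  assume "\<not> ?thesis"
  then obtain C1 C2 C3 where "C1 \<in> cliques_at \<C> v" "C2 \<in> cliques_at \<C> v" "C3 \<in> cliques_at \<C> v"
    "C1 \<noteq> C2" "C1 \<noteq> C3" "C2 \<noteq> C3"
    by (auto simp: numeral_eq_Suc card_le_Suc_iff not_le Suc_le_eq[symmetric])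
  then show False using simple_intersectionD[OF assms, of C1 C2 C3] unfolding cliques_at_def by blast
qed

lemma mem_cpart_cliques_at: "v \<in> cpart \<C> (cliques_at \<C> v)"
proof (cases "card (cliques_at \<C> v) = 1")
  case True
  then obtain C where C: "cliques_at \<C> v = {C}" by (rule card_1_singletonE)
  then have "v \<in> C" "\<forall>D \<in> \<C> - {C}. v \<notin> D" unfolding cliques_at_def by blast+
  then show ?thesis using True C unfolding cpart_def by simp
qed (simp add: cpart_def cliques_at_def)

lemma cpart_subset_V:
  assumes "clique_cover V E \<C>" and "I \<in> ccg_V \<C>"
  shows "cpart \<C> I \<subseteq> V"
proof -
  from assms(2) obtain C where C: "C \<in> I" and "I \<subseteq> \<C>" unfolding ccg_V_def by fastforce
  moreover have "cpart \<C> I \<subseteq> C"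
  proof (cases "card I = 1")
    case True
    then obtain D where "I = {D}" by (rule card_1_singletonE)
    then show ?thesis using True C unfolding cpart_def by auto
  qed (use C in \<open>auto simp: cpart_def\<close>)
  ultimately show ?thesis using assms(1) unfolding clique_cover_def is_clique_def by blast
qed

lemma cliques_at_cpart:
  assumes "simple_intersection \<C>" and I: "I \<in> ccg_V \<C>" and v: "v \<in> cpart \<C> I"
  shows "cliques_at \<C> v = I"
proof -
  from I have IC: "I \<subseteq> \<C>" and "card I = 1 \<or> card I = 2" unfolding ccg_V_def by auto
  then consider C where "I = {C}" | C D where "I = {C, D}" "C \<noteq> D"
    by (metis card_1_singletonE card_2_iff)
  then show ?thesis
  proof cases
    case 1
    then show ?thesis using v IC unfolding cpart_def cliques_at_def by auto
  next
    case 2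
    then have vCD: "v \<in> C" "v \<in> D" using v unfolding cpart_def by auto
    have "X \<in> {C, D}" if "X \<in> \<C>" "v \<in> X" for X
    proof (rule ccontr)
      assume "X \<notin> {C, D}"
      then have "C \<inter> D \<inter> X = {}"
        using 2 IC that(1) by (intro simple_intersectionD[OF assms(1)]) auto
      then show False using vCD that(2) by blast
    qed
    then show ?thesis using 2 IC vCD unfolding cliques_at_def by auto
  qed
qed

lemma ex_cpart_section:
  assumes "clique_cover V E \<C>" and "simple_intersection \<C>"
  obtains \<phi> where "\<And>I. I \<in> ccg_V \<C> \<Longrightarrow> \<phi> I \<in> cpart \<C> I"
    and "\<And>I. I \<in> ccg_V \<C> \<Longrightarrow> \<phi> I \<in> V"
    and "\<And>I. I \<in> ccg_V \<C> \<Longrightarrow> cliques_at \<C> (\<phi> I) = I"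
proof -
  let ?\<phi> = "\<lambda>I. SOME v. v \<in> cpart \<C> I"
  have in_cpart: "?\<phi> I \<in> cpart \<C> I" if "I \<in> ccg_V \<C>" for I
    using that unfolding ccg_V_def by (auto intro: someI_ex)
  show ?thesis
  proof (rule that)
    show "?\<phi> I \<in> V" if "I \<in> ccg_V \<C>" for I
      using in_cpart[OF that] cpart_subset_V[OF assms(1) that] by blast
    show "cliques_at \<C> (?\<phi> I) = I" if "I \<in> ccg_V \<C>" for I
      using cliques_at_cpart[OF assms(2) that in_cpart[OF that]] .
  qed (fact in_cpart)
qed

lemma clique_blowup_ccg:
  assumes "sgraph V E" and cover: "clique_cover V E \<C>" and SI: "simple_intersection \<C>"
    and no_isolated: "\<And>v. v \<in> V \<Longrightarrow> \<exists>u. adj E v u"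
  shows "clique_blowup V E (ccg_V \<C>) (ccg_E \<C>) (cliques_at \<C>)"
proof
  show "finite V" using assms(1) unfolding sgraph_def by auto
  have "ccg_V \<C> \<subseteq> Pow \<C>" unfolding ccg_V_def by auto
  then show "finite (ccg_V \<C>)" using cover unfolding clique_cover_def by (meson finite_Pow_iff finite_subset)
  show "adj E u v \<Longrightarrow> u \<in> V \<and> v \<in> V" for u v
    using assms(1) unfolding sgraph_def adj_def by (metis doubleton_eq_iff)
  show "adj (ccg_E \<C>) I J \<Longrightarrow> I \<in> ccg_V \<C> \<and> J \<in> ccg_V \<C>" for I J
    by (simp add: adj_ccg_E_iff)
  have nonempty: "cliques_at \<C> v \<noteq> {}" if "v \<in> V" for v
    using no_isolated[OF that] cover unfolding adj_def clique_cover_def cliques_at_def by blast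
  have "card (cliques_at \<C> v) = 1 \<or> card (cliques_at \<C> v) = 2" if "v \<in> V" for v
  proof -
    have "finite (cliques_at \<C> v)"
      using cover unfolding clique_cover_def cliques_at_def by simp
    then have "card (cliques_at \<C> v) \<noteq> 0" using nonempty[OF that] by simp
    then show ?thesis using card_cliques_at_le[OF SI, of v] by linarith
  qed
  then show in_ccg_V: "cliques_at \<C> v \<in> ccg_V \<C>" if "v \<in> V" for v
    using that mem_cpart_cliques_at[of v \<C>] unfolding ccg_V_def cliques_at_def by blast
  show "adj E u v \<longleftrightarrow> cliques_at \<C> u = cliques_at \<C> v \<or> adj (ccg_E \<C>) (cliques_at \<C> u) (cliques_at \<C> v)"
    if "u \<in> V" "v \<in> V" "u \<noteq> v" for u v
  proof -
    have "adj E u v \<longleftrightarrow> cliques_at \<C> u \<inter> cliques_at \<C> v \<noteq> {}"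
      using edge_iff_cliques_at[OF cover that] that(3) unfolding adj_def by simp
    then show ?thesis
      using nonempty[OF that(1)] in_ccg_V[OF that(1)] in_ccg_V[OF that(2)] adj_ccg_E_iff by auto
  qed
qed

theorem mainTheorem5:
  fixes V :: "'a set" and E :: "'a set set" and \<C> :: "'a set set"
  assumes "sgraph V E"
    and "connected_graph V E"
    and "\<not> is_clique V E V"
    and "minmax_clique_cover V E \<C>"
    and "simple_intersection \<C>"
  shows "int (card V) - int (Zplus V E)
           = int (card (ccg_V \<C>)) - int (Zplus (ccg_V \<C>) (ccg_E \<C>)) \<and>
         (\<exists>B fs B' fs' \<phi>.
           pzf_process V E B fs \<and> card B = Zplus V E \<and>
           pzf_process (ccg_V \<C>) (ccg_E \<C>) B' fs' \<and> card B' = Zplus (ccg_V \<C>) (ccg_E \<C>) \<and>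
           inj_on \<phi> (ccg_V \<C>) \<and> (\<forall>I\<in>ccg_V \<C>. \<phi> I \<in> cpart \<C> I) \<and>
           set fs = (\<lambda>(u, w). (\<phi> u, \<phi> w)) ` set fs' \<and>
           B = \<phi> ` B' \<union> (V - \<phi> ` ccg_V \<C>))"
proof -
  have cover: "clique_cover V E \<C>" using assms(4) unfolding minmax_clique_cover_def by auto
  interpret ccg: clique_blowup V E "ccg_V \<C>" "ccg_E \<C>" "cliques_at \<C>"
    using clique_blowup_ccg[OF assms(1) cover assms(5) connected_non_clique_ex_adj[OF assms(2,3)]] .
  obtain \<phi> where phi_cpart: "\<And>I. I \<in> ccg_V \<C> \<Longrightarrow> \<phi> I \<in> cpart \<C> I"
    and section_in_V: "\<And>I. I \<in> ccg_V \<C> \<Longrightarrow> \<phi> I \<in> V"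
    and f_section: "\<And>I. I \<in> ccg_V \<C> \<Longrightarrow> cliques_at \<C> (\<phi> I) = I"
    using ex_cpart_section[OF cover assms(5)] by blast
  obtain a b where ab: "a \<in> V" "b \<in> V" "a \<noteq> b" "{a, b} \<notin> E"
    using assms(3) unfolding is_clique_def by auto
  have "cliques_at \<C> a \<noteq> {}" using ccg.f_in_W[OF ab(1)] unfolding ccg_V_def by auto
  then have "cliques_at \<C> a \<noteq> cliques_at \<C> b"
    using edge_iff_cliques_at[OF cover ab(1-3)] ab(4) by auto
  then have no_isolated_H: "\<forall>I\<in>ccg_V \<C>. \<exists>J. adj (ccg_E \<C>) I J"
    using ccg.no_isolated_of_connected[OF section_in_V f_section assms(2) ab(1,2)] by blast
  obtain B' fs' where "pzf_process (ccg_V \<C>) (ccg_E \<C>) B' fs'"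
    and "card B' = Zplus (ccg_V \<C>) (ccg_E \<C>)"
    and "pzf_process V E (ccg.lift_black \<phi> B') (map (\<lambda>(u, w). (\<phi> u, \<phi> w)) fs')"
    and "card (ccg.lift_black \<phi> B') = Zplus V E"
    using ccg.optimal_process_lift[OF section_in_V f_section no_isolated_H] .
  moreover have "card V + Zplus (ccg_V \<C>) (ccg_E \<C>) = card (ccg_V \<C>) + Zplus V E"
    using ccg.Zplus_blowup[OF section_in_V f_section no_isolated_H] .
  moreover have "inj_on \<phi> (ccg_V \<C>)" using f_section by (metis inj_onI)
  ultimately show ?thesis
    using phi_cpart unfolding ccg.lift_black_def
    by (intro conjI exI[of _ "\<phi> ` B' \<union> (V - \<phi> ` ccg_V \<C>)"]
        exI[of _ "map (\<lambda>(u, w). (\<phi> u, \<phi> w)) fs'"] exI[of _ B'] exI[of _ fs'] exI[of _ \<phi>])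
      simp_all
qed

end
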